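(* Let $G$ be a Nash equilibrium graph of the sum network creation game with $n$ players and $H\subseteq G$ a non-trivial $2$-edge-connected component, with $g(G)>14$. Then every $2$-path $\pi=u_0-u_1-\dots-u_k$ in $H$ with $k\ge 5$, oriented so that each $u_i$ ($0\le i<k$) has bought the link $(u_i,u_{i+1})$, satisfies $$D(u_5)-D(u_0)\ge 2n-(U_1+U_2+U_3+U_4).$$
   Context: Sum network creation game: players $V=\{1,\dots,n\}$, parameter $\alpha>0$; a strategy of $u$ is $s_u\subseteq V\setminus\{u\}$; $G_s$ has an edge $uv$ whenever $v\in s_u$ or $u\in s_v$, regarded as a digraph with arc $(u,v)$ when $v\in s_u$; the cost of $u$ is $\alpha|s_u|+\sum_{v\ne u}d_{G_s}(u,v)$. A Nash equilibrium graph is $G_s$ for $s$ from which no player can strictly lower his cost unilaterally. $D(u)=\sum_{v\ne u}d_G(u,v)$. A $2$-edge-connected component $H$ is a maximal bridgeless subgraph; non-trivial means at least $3$ vertices. For $u\in V(H)$, $T(u)$ is the connected component containing $u$ of the subgraph induced by $(V(G)\setminus V(H))\cup\{u\}$, and $U_i=|T(u_i)|$. A $2$-path in $H$ is a path $u_0-\dots-u_k$ in $H$ with $deg^-_H(u_i)=deg^+_H(u_i)=1$ for $0<i<k$ (degrees counted over arcs inside $H$). $g(G)$ denotes the girth of $G$. *)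

theory Defs
  imports Main "HOL-Library.Extended_Real"
begin

definition reachable :: "(nat \<Rightarrow> nat \<Rightarrow> bool) \<Rightarrow> nat \<Rightarrow> nat \<Rightarrow> bool" where
  "reachable E a b \<longleftrightarrow> E\<^sup>*\<^sup>* a b"

definition walk_of_len :: "(nat \<Rightarrow> nat \<Rightarrow> bool) \<Rightarrow> nat \<Rightarrow> nat \<Rightarrow> nat \<Rightarrow> bool" where
  "walk_of_len E k u v \<longleftrightarrow>
     (\<exists>p :: nat \<Rightarrow> nat. p 0 = u \<and> p k = v \<and> (\<forall>i<k. E (p i) (p (Suc i))))"

text \<open>Graph distance (only meaningful for reachable pairs).\<close>
definition gdist :: "(nat \<Rightarrow> nat \<Rightarrow> bool) \<Rightarrow> nat \<Rightarrow> nat \<Rightarrow> nat" where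
  "gdist E u v = (LEAST k. walk_of_len E k u v)"

definition has_cycle_len :: "(nat \<Rightarrow> nat \<Rightarrow> bool) \<Rightarrow> nat \<Rightarrow> bool" where
  "has_cycle_len E L \<longleftrightarrow> L \<ge> 3 \<and>
     (\<exists>c :: nat \<Rightarrow> nat. inj_on c {0..<L} \<and> (\<forall>i<L. E (c i) (c (Suc i mod L))))"

definition girth :: "(nat \<Rightarrow> nat \<Rightarrow> bool) \<Rightarrow> enat" where
  "girth E = Inf {enat L | L. has_cycle_len E L}"

definition strategy_profile :: "nat \<Rightarrow> (nat \<Rightarrow> nat set) \<Rightarrow> bool" where
  "strategy_profile n s \<longleftrightarrow> (\<forall>u\<in>{1..n}. s u \<subseteq> {1..n} - {u})"

definition Gs :: "nat \<Rightarrow> (nat \<Rightarrow> nat set) \<Rightarrow> nat \<Rightarrow> nat \<Rightarrow> bool" where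
  "Gs n s x y \<longleftrightarrow> x \<in> {1..n} \<and> y \<in> {1..n} \<and> x \<noteq> y \<and> (y \<in> s x \<or> x \<in> s y)"

definition cost :: "nat \<Rightarrow> real \<Rightarrow> (nat \<Rightarrow> nat set) \<Rightarrow> nat \<Rightarrow> ereal" where
  "cost n \<alpha> s u =
     (if \<forall>v\<in>{1..n}. reachable (Gs n s) u v
      then ereal (\<alpha> * real (card (s u)) + (\<Sum>v\<in>{1..n} - {u}. real (gdist (Gs n s) u v)))
      else \<infinity>)"

definition nash_equilibrium :: "nat \<Rightarrow> real \<Rightarrow> (nat \<Rightarrow> nat set) \<Rightarrow> bool" where
  "nash_equilibrium n \<alpha> s \<longleftrightarrow> strategy_profile n s \<and>
     (\<forall>u\<in>{1..n}. \<forall>s'. s' \<subseteq> {1..n} - {u} \<longrightarrow> cost n \<alpha> s u \<le> cost n \<alpha> (s(u := s')) u)"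

definition Dsum :: "nat \<Rightarrow> (nat \<Rightarrow> nat \<Rightarrow> bool) \<Rightarrow> nat \<Rightarrow> nat" where
  "Dsum n E u = (\<Sum>v\<in>{1..n} - {u}. gdist E u v)"

definition subgraph :: "nat set \<Rightarrow> (nat \<Rightarrow> nat \<Rightarrow> bool) \<Rightarrow> nat set \<Rightarrow> (nat \<Rightarrow> nat \<Rightarrow> bool) \<Rightarrow> bool" where
  "subgraph W F V E \<longleftrightarrow> W \<subseteq> V \<and> (\<forall>x y. F x y \<longrightarrow> x \<in> W \<and> y \<in> W \<and> E x y) \<and> (\<forall>x y. F x y \<longrightarrow> F y x)"

definition connected_sg :: "nat set \<Rightarrow> (nat \<Rightarrow> nat \<Rightarrow> bool) \<Rightarrow> bool" where
  "connected_sg W F \<longleftrightarrow> W \<noteq> {} \<and> (\<forall>a\<in>W. \<forall>b\<in>W. reachable F a b)"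

definition bridgeless_sg :: "nat set \<Rightarrow> (nat \<Rightarrow> nat \<Rightarrow> bool) \<Rightarrow> bool" where
  "bridgeless_sg W F \<longleftrightarrow> connected_sg W F \<and>
     (\<forall>x y. F x y \<longrightarrow> connected_sg W (\<lambda>a b. F a b \<and> {a, b} \<noteq> {x, y}))"

definition two_ec_component :: "nat set \<Rightarrow> (nat \<Rightarrow> nat \<Rightarrow> bool) \<Rightarrow> nat set \<Rightarrow> (nat \<Rightarrow> nat \<Rightarrow> bool) \<Rightarrow> bool" where
  "two_ec_component V E W F \<longleftrightarrow> subgraph W F V E \<and> bridgeless_sg W F \<and>
     \<not> (\<exists>W' F'. subgraph W' F' V E \<and> bridgeless_sg W' F' \<and> W \<subseteq> W' \<and> F \<le> F' \<and> (W, F) \<noteq> (W', F'))"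

definition Tset :: "nat set \<Rightarrow> (nat \<Rightarrow> nat \<Rightarrow> bool) \<Rightarrow> nat set \<Rightarrow> nat \<Rightarrow> nat set" where
  "Tset V E W u = {v. reachable (\<lambda>x y. E x y \<and> x \<in> (V - W) \<union> {u} \<and> y \<in> (V - W) \<union> {u}) u v}"

definition outdeg_H :: "(nat \<Rightarrow> nat set) \<Rightarrow> nat set \<Rightarrow> (nat \<Rightarrow> nat \<Rightarrow> bool) \<Rightarrow> nat \<Rightarrow> nat" where
  "outdeg_H s W F u = card {v\<in>W. F u v \<and> v \<in> s u}"

definition indeg_H :: "(nat \<Rightarrow> nat set) \<Rightarrow> nat set \<Rightarrow> (nat \<Rightarrow> nat \<Rightarrow> bool) \<Rightarrow> nat \<Rightarrow> nat" where
  "indeg_H s W F u = card {v\<in>W. F u v \<and> u \<in> s v}"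

definition two_path :: "(nat \<Rightarrow> nat set) \<Rightarrow> nat set \<Rightarrow> (nat \<Rightarrow> nat \<Rightarrow> bool) \<Rightarrow> (nat \<Rightarrow> nat) \<Rightarrow> nat \<Rightarrow> bool" where
  "two_path s W F u k \<longleftrightarrow>
     inj_on u {0..k} \<and> (\<forall>i\<le>k. u i \<in> W) \<and> (\<forall>i<k. F (u i) (u (Suc i))) \<and>
     (\<forall>i. 0 < i \<and> i < k \<longrightarrow> indeg_H s W F (u i) = 1 \<and> outdeg_H s W F (u i) = 1)"

end

theory Submission
  imports Defs
begin

text \<open>
  Maximality of the 2-edge-connected component H makes every vertex outside H hang off a unique
  root in H, and forces the interior vertices u 1, ..., u 4 of the 2-path to have no neighbours
  in H besides their path neighbours. Hence for v outside T(u i) a shortest path from u i to v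
  leaves through u (i-1) or u (i+1), so d(u i, v) = 1 + min (d(u (i-1), v), d(u (i+1), v)); and
  since the girth exceeds 14, u 0, ..., u 5 is a geodesic.

  In equilibrium u j cannot profit by swapping its link to u (j+1) for one to u (j+2). Vertices of
  T(u (j+1)) get at most one step farther from u j, vertices strictly closer to u (j+1) than to
  u j get one step nearer, and all others keep their distance; so the net count of these
  changes is nonnegative for j = 0, ..., 3. Adding these four inequalities to a per-vertex
  inequality, which follows from the min-recurrence above when v lies in no T(u i) and from the
  geodesic otherwise, gives the bound.
\<close>

section \<open>Walks and graph distance\<close>

lemma walk_of_len_0: "walk_of_len E 0 u u"
  unfolding walk_of_len_def by (rule exI[of _ "\<lambda>_. u"]) simp

lemma walk_of_len_edge: "E u v \<Longrightarrow> walk_of_len E 1 u v"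
  unfolding walk_of_len_def by (rule exI[of _ "\<lambda>i. if i = 0 then u else v"]) simp

lemma walk_of_len_along:
  assumes "\<And>i. i < m \<Longrightarrow> E (p i) (p (Suc i))"
  shows "walk_of_len E m (p 0) (p m)"
  using assms unfolding walk_of_len_def by blast

lemma walk_of_len_append:
  assumes "walk_of_len E a u v" "walk_of_len E b v w"
  shows "walk_of_len E (a + b) u w"
proof -
  obtain p q where p: "p 0 = u" "p a = v" "\<forall>i<a. E (p i) (p (Suc i))"
    and q: "q 0 = v" "q b = w" "\<forall>i<b. E (q i) (q (Suc i))"
    using assms unfolding walk_of_len_def by blast
  define r where "r i = (if i \<le> a then p i else q (i - a))" for i
  have "E (r i) (r (Suc i))" if "i < a + b" for i
  proof (cases "i < a")
    case False
    then have "i - a < b" "Suc i - a = Suc (i - a)" using that by auto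
    then show ?thesis using p q False by (cases "i = a") (auto simp: r_def)
  qed (use p in \<open>simp add: r_def\<close>)
  moreover have "r 0 = u" "r (a + b) = w" using p q by (auto simp: r_def)
  ultimately show ?thesis unfolding walk_of_len_def by metis
qed

lemma walk_of_len_rev:
  assumes "symp E" "walk_of_len E k u v"
  shows "walk_of_len E k v u"
proof -
  obtain p where p: "p 0 = u" "p k = v" "\<forall>i<k. E (p i) (p (Suc i))"
    using assms(2) unfolding walk_of_len_def by blast
  have "E (p (k - i)) (p (k - Suc i))" if "i < k" for i
    using p(3)[rule_format, of "k - Suc i"] that sympD[OF assms(1)] by (simp add: Suc_diff_Suc)
  then show ?thesis unfolding walk_of_len_def using p by (intro exI[of _ "\<lambda>i. p (k - i)"]) auto
qed

lemma walk_of_len_mono: "E \<le> E' \<Longrightarrow> walk_of_len E k u v \<Longrightarrow> walk_of_len E' k u v"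
  unfolding walk_of_len_def by blast

lemma walk_of_len_prefix:
  "\<forall>i<L. E (p i) (p (Suc i)) \<Longrightarrow> t \<le> L \<Longrightarrow> walk_of_len E t (p 0) (p t)"
  unfolding walk_of_len_def by (intro exI[of _ p]) auto

lemma walk_of_len_suffix:
  "\<forall>i<L. E (p i) (p (Suc i)) \<Longrightarrow> t \<le> L \<Longrightarrow> walk_of_len E (L - t) (p t) (p L)"
  unfolding walk_of_len_def by (intro exI[of _ "\<lambda>i. p (t + i)"]) auto

lemma rtranclp_along:
  "(\<And>j. a \<le> j \<Longrightarrow> j < b \<Longrightarrow> R (p j) (p (Suc j))) \<Longrightarrow> a \<le> b \<Longrightarrow> R\<^sup>*\<^sup>* (p a) (p b)"
proof (induction b)
  case (Suc b)
  then show ?case by (cases "a = Suc b") (auto intro: rtranclp.rtrancl_into_rtrancl)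
qed simp

lemma reachable_iff_walk_of_len: "reachable E u v \<longleftrightarrow> (\<exists>k. walk_of_len E k u v)"
proof
  assume "reachable E u v"
  then show "\<exists>k. walk_of_len E k u v"
    unfolding reachable_def
  proof (induction rule: rtranclp_induct)
    case (step y z)
    then show ?case using walk_of_len_append walk_of_len_edge by blast
  qed (use walk_of_len_0 in blast)
next
  assume "\<exists>k. walk_of_len E k u v"
  then obtain k p where "p 0 = u" "p k = v" "\<forall>i<k. E (p i) (p (Suc i))"
    unfolding walk_of_len_def by blast
  then show "reachable E u v"
    unfolding reachable_def using rtranclp_along[of 0 k E p] by simp
qed

lemma gdist_le: "walk_of_len E k u v \<Longrightarrow> gdist E u v \<le> k"
  unfolding gdist_def by (rule Least_le)

lemma walk_of_len_gdist: "reachable E u v \<Longrightarrow> walk_of_len E (gdist E u v) u v"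
  unfolding gdist_def reachable_iff_walk_of_len by (rule LeastI_ex)

lemma gdist_self [simp]: "gdist E u u = 0"
  using gdist_le[OF walk_of_len_0] by simp

lemma gdist_edge: "E u v \<Longrightarrow> gdist E u v \<le> 1"
  using gdist_le[OF walk_of_len_edge] .

lemma gdist_triangle:
  "reachable E u v \<Longrightarrow> reachable E v w \<Longrightarrow> gdist E u w \<le> gdist E u v + gdist E v w"
  by (rule gdist_le[OF walk_of_len_append[OF walk_of_len_gdist walk_of_len_gdist]])

lemma gdist_commute: "symp E \<Longrightarrow> gdist E u v = gdist E v u"
  unfolding gdist_def by (metis walk_of_len_rev)

lemma gdist_eq_0_imp_eq: "reachable E u v \<Longrightarrow> gdist E u v = 0 \<Longrightarrow> u = v"
  using walk_of_len_gdist unfolding walk_of_len_def by fastforce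

lemma shortest_walk_inj:
  assumes p: "p 0 = a" "p L = b" "\<forall>i<L. E (p i) (p (Suc i))" and L: "L = gdist E a b"
  shows "inj_on p {0..L}"
proof (rule ccontr)
  assume "\<not> inj_on p {0..L}"
  then obtain i j where ij: "i < j" "j \<le> L" "p i = p j"
    unfolding inj_on_def by (metis atLeastAtMost_iff linorder_neqE_nat)
  \<comment> \<open>cut out the closed subwalk from i to j\<close>
  define q where "q t = (if t \<le> i then p t else p (t + (j - i)))" for t
  have "E (q t) (q (Suc t))" if "t < L - (j - i)" for t
    using p(3) that ij by (cases "t < i") (auto simp: q_def)
  moreover have "q 0 = a" "q (L - (j - i)) = b" using p ij by (cases "j = L"; auto simp: q_def)+
  ultimately have "gdist E a b \<le> L - (j - i)"
    using gdist_le walk_of_len_along[of "L - (j - i)" E q] by metis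
  then show False using L ij by linarith
qed

lemma shortest_walk_avoids:
  assumes p: "p 0 = a" "p L = b" "\<forall>i<L. E (p i) (p (Suc i))" and L: "L = gdist E a b"
    and c: "c \<noteq> a" "L \<le> gdist E c b"
  shows "walk_of_len (\<lambda>x y. E x y \<and> x \<noteq> c \<and> y \<noteq> c) L a b"
proof -
  have "p t \<noteq> c" if "0 < t" "t \<le> L" for t
    using gdist_le[OF walk_of_len_suffix[of L E p, OF p(3) that(2)]] p(2) c(2) that by auto
  then have "p t \<noteq> c" if "t \<le> L" for t using that c(1) p(1) by (cases "t = 0") auto
  then show ?thesis unfolding walk_of_len_def using p by (intro exI[of _ p]) auto
qed

lemma lipschitz_potential_le_walk_length:
  fixes \<phi> :: "nat \<Rightarrow> int"
  assumes "\<And>x y. E x y \<Longrightarrow> \<bar>\<phi> x - \<phi> y\<bar> \<le> 1" and "walk_of_len E m a b"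
  shows "\<bar>\<phi> a - \<phi> b\<bar> \<le> int m"
proof -
  obtain p where p: "p 0 = a" "p m = b" "\<forall>i<m. E (p i) (p (Suc i))"
    using assms(2) unfolding walk_of_len_def by blast
  have "\<bar>\<phi> (p 0) - \<phi> (p t)\<bar> \<le> int t" if "t \<le> m" for t
    using that
  proof (induction t)
    case (Suc t)
    then have "\<bar>\<phi> (p t) - \<phi> (p (Suc t))\<bar> \<le> 1" using assms(1) p(3) by auto
    then show ?case using Suc by auto
  qed simp
  then show ?thesis using p by auto
qed

definition trunc_gdist :: "(nat \<Rightarrow> nat \<Rightarrow> bool) \<Rightarrow> nat \<Rightarrow> int \<Rightarrow> nat \<Rightarrow> int" where
  "trunc_gdist E r c x = (if reachable E r x then min c (int (gdist E r x)) else c)"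

lemma trunc_gdist_lipschitz:
  assumes "symp E" "E x y"
  shows "\<bar>trunc_gdist E r c x - trunc_gdist E r c y\<bar> \<le> 1"
proof -
  have step: "reachable E r y \<and> gdist E r y \<le> gdist E r x + 1"
    if "reachable E r x" "E x y" for x y
    using gdist_le[OF walk_of_len_append[OF walk_of_len_gdist[OF that(1)]
        walk_of_len_edge[of E, OF that(2)]]] that
    unfolding reachable_def by (auto intro: rtranclp.rtrancl_into_rtrancl)
  have "E y x" using assms by (simp add: sympD)
  then show ?thesis
    using step[of x y] step[of y x] assms(2) unfolding trunc_gdist_def by auto
qed

section \<open>Ears of a 2-edge-connected component\<close>

lemma connected_sg_mono: "connected_sg W R \<Longrightarrow> R \<le> R' \<Longrightarrow> connected_sg W R'"
  unfolding connected_sg_def reachable_def by (metis rtranclp_mono predicate2D)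

lemma connected_sg_attach:
  assumes "symp R" "connected_sg W R" "W \<subseteq> W'"
    and "\<And>a. a \<in> W' \<Longrightarrow> \<exists>b\<in>W. R\<^sup>*\<^sup>* b a"
  shows "connected_sg W' R"
  unfolding connected_sg_def reachable_def
proof (intro conjI ballI)
  show "W' \<noteq> {}" using assms(2,3) unfolding connected_sg_def by blast
  fix a a' assume "a \<in> W'" "a' \<in> W'"
  then obtain b b' where "b \<in> W" "b' \<in> W" "R\<^sup>*\<^sup>* b a" "R\<^sup>*\<^sup>* b' a'" using assms(4) by blast
  moreover have "R\<^sup>*\<^sup>* b b'" using assms(2) \<open>b \<in> W\<close> \<open>b' \<in> W\<close>
    unfolding connected_sg_def reachable_def by blast
  ultimately show "R\<^sup>*\<^sup>* a a'"
    using sympD[OF symp_rtranclp[OF assms(1)]] by (meson rtranclp_trans)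
qed

lemma connected_sg_add_ear:
  assumes "symp R" "connected_sg W R" "p 0 \<in> W" "p m \<in> W"
    and "\<And>i. i < m \<Longrightarrow> i \<noteq> j \<Longrightarrow> R (p i) (p (Suc i))"
  shows "connected_sg (W \<union> p ` {0..m}) R"
proof (rule connected_sg_attach[OF assms(1,2)])
  fix a assume "a \<in> W \<union> p ` {0..m}"
  then consider "a \<in> W" | i where "i \<le> m" "a = p i" by auto
  then show "\<exists>b\<in>W. R\<^sup>*\<^sup>* b a"
  proof cases
    case (2 i)
    show ?thesis
    proof (cases "i \<le> j")
      case True
      then have "R\<^sup>*\<^sup>* (p 0) (p i)" using rtranclp_along[of 0 i R p] assms(5) 2 by simp
      then show ?thesis using 2 assms(3) by blast
    next
      case False
      then have "R\<^sup>*\<^sup>* (p i) (p m)" using rtranclp_along[of i m R p] assms(5) 2 by simp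
      then show ?thesis using 2 assms(4) sympD[OF symp_rtranclp[OF assms(1)]] by blast
    qed
  qed blast
qed auto

definition path_edge :: "(nat \<Rightarrow> nat) \<Rightarrow> nat \<Rightarrow> nat \<Rightarrow> nat \<Rightarrow> bool" where
  "path_edge p m x y \<longleftrightarrow> (\<exists>i<m. {x, y} = {p i, p (Suc i)})"

lemma path_edge_commute: "path_edge p m x y \<longleftrightarrow> path_edge p m y x"
  unfolding path_edge_def by (simp add: insert_commute)

lemma path_edge_along: "i < m \<Longrightarrow> path_edge p m (p i) (p (Suc i))"
  unfolding path_edge_def by blast

lemma bridgeless_sg_add_ear:
  assumes bl: "bridgeless_sg W F" and "symp F" "p 0 \<in> W" "p m \<in> W" and inj: "inj_on p {0..m}"
    and new: "\<And>i. i < m \<Longrightarrow> \<not> F (p i) (p (Suc i))"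
  shows "bridgeless_sg (W \<union> p ` {0..m}) (\<lambda>x y. F x y \<or> path_edge p m x y)"
    (is "bridgeless_sg ?W' ?F'")
proof -
  have F_not_path: "{x, y} \<noteq> {p i, p (Suc i)}" if "F x y" "i < m" for x y i
    using that new[of i] sympD[OF \<open>symp F\<close>] by (auto simp: doubleton_eq_iff)
  have F_conn: "connected_sg W F" using bl unfolding bridgeless_sg_def by blast
  have "symp ?F'" using \<open>symp F\<close> by (auto simp: symp_def path_edge_commute)
  moreover have "connected_sg W ?F'" using F_conn by (rule connected_sg_mono) auto
  ultimately have "connected_sg ?W' ?F'"
    using connected_sg_add_ear[of ?F' W p m m] assms(3,4) by (auto simp: path_edge_along)
  moreover have "connected_sg ?W' (\<lambda>a b. ?F' a b \<and> {a, b} \<noteq> {x, y})" if xy: "?F' x y" for x y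
  proof -
    let ?R = "\<lambda>a b. ?F' a b \<and> {a, b} \<noteq> {x, y}"
    have "symp ?R" using \<open>symp F\<close> by (auto simp: symp_def path_edge_commute insert_commute)
    show ?thesis
    proof (cases "F x y")
      case True
      have "connected_sg W (\<lambda>a b. F a b \<and> {a, b} \<noteq> {x, y})"
        using bl True unfolding bridgeless_sg_def by blast
      then have "connected_sg W ?R" by (rule connected_sg_mono) auto
      then show ?thesis using connected_sg_add_ear[OF \<open>symp ?R\<close> _ assms(3,4), of m]
        F_not_path[OF True] by (auto simp: path_edge_along)
    next
      case False
      then obtain j where j: "j < m" "{x, y} = {p j, p (Suc j)}"
        using xy unfolding path_edge_def by blast
      have "connected_sg W ?R" using F_conn by (rule connected_sg_mono) (use F_not_path j in auto)
      moreover have "{p i, p (Suc i)} \<noteq> {p j, p (Suc j)}" if "i < m" "i \<noteq> j" for i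
        using that j(1) inj_on_eq_iff[OF inj] by (auto simp: doubleton_eq_iff)
      ultimately show ?thesis using connected_sg_add_ear[OF \<open>symp ?R\<close> _ assms(3,4), of j] j
        by (auto simp: path_edge_along)
    qed
  qed
  ultimately show ?thesis unfolding bridgeless_sg_def by blast
qed

lemma two_ec_component_no_ear:
  assumes comp: "two_ec_component V E W F" and "symp E" and "1 \<le> m"
    and ends: "p 0 \<in> W" "p m \<in> W" and inj: "inj_on p {0..m}"
    and inner: "\<And>i. 0 < i \<Longrightarrow> i < m \<Longrightarrow> p i \<in> V - W"
    and edges: "\<And>i. i < m \<Longrightarrow> E (p i) (p (Suc i))"
    and new: "2 \<le> m \<or> \<not> F (p 0) (p 1)"
  shows False
proof -
  let ?W' = "W \<union> p ` {0..m}" and ?F' = "\<lambda>x y. F x y \<or> path_edge p m x y"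
  have sg: "subgraph W F V E" and bl: "bridgeless_sg W F"
    using comp unfolding two_ec_component_def by auto
  then have "symp F" and FW: "\<And>x y. F x y \<Longrightarrow> x \<in> W \<and> y \<in> W"
    unfolding subgraph_def symp_def by auto
  have not_F: "\<not> F (p i) (p (Suc i))" if "i < m" for i
  proof (cases "m = 1")
    case False
    then have "p i \<notin> W \<or> p (Suc i) \<notin> W" using inner[of i] inner[of "Suc i"] that \<open>1 \<le> m\<close>
      by (cases "i = 0") auto
    then show ?thesis using FW by blast
  qed (use new that in auto)
  have "p i \<in> V" if "i \<le> m" for i
    using that ends inner sg unfolding subgraph_def by (cases "0 < i \<and> i < m") auto
  then have "subgraph ?W' ?F' V E"
    using sg edges sympD[OF \<open>symp E\<close>] unfolding subgraph_def path_edge_def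
    by (auto simp: doubleton_eq_iff)
  moreover have "bridgeless_sg ?W' ?F'"
    using bridgeless_sg_add_ear[of W F p m] bl \<open>symp F\<close> ends inj not_F by blast
  moreover have "(W, F) \<noteq> (?W', ?F')"
  proof (cases "m = 1")
    case True
    then have "?F' (p 0) (p 1)" "\<not> F (p 0) (p 1)" using not_F by (auto simp: path_edge_along)
    then show ?thesis by (metis prod.inject)
  next
    case False
    then show ?thesis using inner[of 1] \<open>1 \<le> m\<close> by auto
  qed
  ultimately show False using comp unfolding two_ec_component_def by blast
qed

section \<open>Cycles and girth\<close>

lemma girth_le: "has_cycle_len E L \<Longrightarrow> girth E \<le> enat L"
  unfolding girth_def by (auto intro: Inf_lower)

lemma has_cycle_len_two_paths:
  assumes "symp E" and inj: "inj_on p {0..a}" "inj_on q {0..b}"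
    and ends: "q 0 = p 0" "q b = p a"
    and edges: "\<And>i. i < a \<Longrightarrow> E (p i) (p (Suc i))" "\<And>i. i < b \<Longrightarrow> E (q i) (q (Suc i))"
    and disjoint: "\<And>i. 0 < i \<Longrightarrow> i < b \<Longrightarrow> q i \<notin> p ` {0..a}"
    and "1 \<le> b" "3 \<le> a + b"
  shows "has_cycle_len E (a + b)"
proof -
  define c where "c t = (if t \<le> a then p t else q (a + b - t))" for t
  have c_q: "c t = q (a + b - t)" if "a \<le> t" "t \<le> a + b" for t
    using that ends by (cases "t = a") (auto simp: c_def)
  have "inj_on c {0..<a + b}"
  proof (rule inj_onI)
    fix t t' assume tt': "t \<in> {0..<a + b}" "t' \<in> {0..<a + b}" "c t = c t'"
    have mixed: False if "t \<le> a" "a < t'" "t' < a + b" "c t = c t'" for t t'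
    proof -
      have "c t' = q (a + b - t')" "c t = p t" using c_q that by (auto simp: c_def)
      then have "q (a + b - t') \<in> p ` {0..a}"
        using that(1,4) by (metis atLeastAtMost_iff image_eqI le0)
      then show False using disjoint that by auto
    qed
    show "t = t'"
    proof (cases "t \<le> a"; cases "t' \<le> a")
      assume "\<not> t \<le> a" "\<not> t' \<le> a"
      then have "a + b - t = a + b - t'"
        using tt' c_q[of t] c_q[of t'] inj_on_eq_iff[OF inj(2)] by auto
      then show ?thesis using tt' by auto
    qed (use tt' mixed[of t t'] mixed[of t' t] inj_on_eq_iff[OF inj(1)] in \<open>auto simp: c_def\<close>)
  qed
  moreover have "E (c t) (c (Suc t mod (a + b)))" if t: "t < a + b" for t
  proof -
    consider "t < a" | "a \<le> t" "Suc t < a + b" | "Suc t = a + b" using t by linarith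
    then show ?thesis
    proof cases
      case 2
      then have "E (q (a + b - Suc t)) (q (Suc (a + b - Suc t)))" using edges(2) by auto
      then show ?thesis using 2 c_q[of t] c_q[of "Suc t"] sympD[OF \<open>symp E\<close>]
        by (simp add: Suc_diff_Suc)
    next
      case 3
      then have "a + b - t = 1" "a \<le> t" using \<open>1 \<le> b\<close> by auto
      then show ?thesis
        using 3 edges(2)[of 0] c_q[of t] \<open>1 \<le> b\<close> ends sympD[OF \<open>symp E\<close>] by (simp add: c_def)
    qed (use edges(1) t \<open>1 \<le> b\<close> in \<open>auto simp: c_def\<close>)
  qed
  ultimately show ?thesis unfolding has_cycle_len_def using \<open>3 \<le> a + b\<close> by blast
qed

section \<open>Nash equilibria\<close>

lemma symp_Gs: "symp (Gs n s)"
  unfolding Gs_def symp_def by auto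

lemma Gs_in_V: "Gs n s x y \<Longrightarrow> x \<in> {1..n} \<and> y \<in> {1..n}"
  unfolding Gs_def by auto

lemma cost_reachable:
  "\<forall>v\<in>{1..n}. reachable (Gs n s) u v
   \<Longrightarrow> cost n \<alpha> s u = ereal (\<alpha> * real (card (s u)) + real (Dsum n (Gs n s) u))"
  unfolding cost_def Dsum_def by simp

lemma Dsum_eq_sum:
  assumes "a \<in> {1..n}"
  shows "int (Dsum n E a) = (\<Sum>v\<in>{1..n}. int (gdist E a v))"
proof -
  have "(\<Sum>v\<in>{1..n}. gdist E a v) = gdist E a a + (\<Sum>v\<in>{1..n} - {a}. gdist E a v)"
    by (rule sum.remove) (use assms in auto)
  then show ?thesis unfolding Dsum_def by (simp flip: of_nat_sum)
qed

lemma nash_equilibrium_reachable: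
  assumes ne: "nash_equilibrium n \<alpha> s" and "x \<in> {1..n}" "y \<in> {1..n}"
  shows "reachable (Gs n s) x y"
proof -
  \<comment> \<open>buying all links would give x a finite cost\<close>
  define s' where "s' = s(x := {1..n} - {x})"
  have "Gs n s' x v" if "v \<in> {1..n}" "v \<noteq> x" for v
    using that assms(2) unfolding Gs_def s'_def by auto
  then have "\<forall>v\<in>{1..n}. reachable (Gs n s') x v"
    unfolding reachable_def by (metis r_into_rtranclp rtranclp.rtrancl_refl)
  then have "cost n \<alpha> s' x \<noteq> \<infinity>" using cost_reachable by simp
  moreover have "cost n \<alpha> s x \<le> cost n \<alpha> s' x"
    using ne assms(2) unfolding nash_equilibrium_def s'_def by blast
  ultimately have "cost n \<alpha> s x \<noteq> \<infinity>" by (metis ereal_infty_less_eq(1))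
  then show ?thesis using assms(3) unfolding cost_def by (auto split: if_splits)
qed

lemma nash_equilibrium_Dsum_le_deviation:
  assumes ne: "nash_equilibrium n \<alpha> s" and a: "a \<in> {1..n}"
    and S: "S \<subseteq> {1..n} - {a}" "card S = card (s a)"
    and reach: "\<forall>v\<in>{1..n}. reachable (Gs n (s(a := S))) a v"
  shows "Dsum n (Gs n s) a \<le> Dsum n (Gs n (s(a := S))) a"
proof -
  have "cost n \<alpha> s a \<le> cost n \<alpha> (s(a := S)) a"
    using ne a S(1) unfolding nash_equilibrium_def by blast
  moreover have "\<forall>v\<in>{1..n}. reachable (Gs n s) a v"
    using nash_equilibrium_reachable[OF ne a] by blast
  ultimately show ?thesis
    using S(2) cost_reachable[OF reach] cost_reachable[of n s a] by simp
qed

section \<open>Pendant trees\<close>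

definition tree_edge :: "nat set \<Rightarrow> (nat \<Rightarrow> nat \<Rightarrow> bool) \<Rightarrow> nat set \<Rightarrow> nat \<Rightarrow> nat \<Rightarrow> nat \<Rightarrow> bool" where
  "tree_edge V E W w x y \<longleftrightarrow> E x y \<and> x \<in> (V - W) \<union> {w} \<and> y \<in> (V - W) \<union> {w}"

lemma Tset_eq: "Tset V E W w = {v. reachable (tree_edge V E W w) w v}"
  unfolding Tset_def tree_edge_def ..

lemma Tset_self [simp]: "w \<in> Tset V E W w"
  unfolding Tset_eq reachable_def by simp

lemma Tset_cases:
  assumes "x \<in> Tset V E W w"
  shows "x = w \<or> x \<in> V - W"
proof -
  have "(tree_edge V E W w)\<^sup>*\<^sup>* w x" using assms unfolding Tset_eq reachable_def by simp
  then show ?thesis by (cases rule: rtranclp.cases) (auto simp: tree_edge_def)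
qed

locale component_graph =
  fixes V :: "nat set" and E :: "nat \<Rightarrow> nat \<Rightarrow> bool" and W :: "nat set" and F :: "nat \<Rightarrow> nat \<Rightarrow> bool"
  assumes component: "two_ec_component V E W F"
    and symp_E: "symp E"
    and edge_in_V: "E x y \<Longrightarrow> x \<in> V \<and> y \<in> V"
    and reachable_V: "x \<in> V \<Longrightarrow> y \<in> V \<Longrightarrow> reachable E x y"
begin

lemma W_subset_V: "W \<subseteq> V"
  using component unfolding two_ec_component_def subgraph_def by (elim conjE)

lemma F_imp_E: "F x y \<Longrightarrow> E x y"
  using component unfolding two_ec_component_def subgraph_def by (elim conjE) blast

lemma symp_F: "symp F"
  using component unfolding two_ec_component_def subgraph_def symp_def by (elim conjE) blast

lemma gdist_le_Suc_neighbour: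
  assumes "E x y" "z \<in> V"
  shows "gdist E x z \<le> 1 + gdist E y z"
proof -
  have "x \<in> V" "y \<in> V" using edge_in_V[OF assms(1)] by auto
  then have "gdist E x z \<le> gdist E x y + gdist E y z"
    using gdist_triangle reachable_V assms(2) by blast
  then show ?thesis using gdist_edge[of E, OF assms(1)] by linarith
qed

lemma Tset_step:
  assumes "x \<in> Tset V E W w" "E x y" "y \<notin> W"
  shows "y \<in> Tset V E W w"
proof -
  have "tree_edge V E W w x y"
    using Tset_cases[OF assms(1)] edge_in_V[OF assms(2)] assms(2,3) by (auto simp: tree_edge_def)
  then show ?thesis using assms(1) unfolding Tset_eq reachable_def mem_Collect_eq
    by (rule rtranclp.rtrancl_into_rtrancl[rotated])
qed

lemma Tset_subset_V: "w \<in> W \<Longrightarrow> Tset V E W w \<subseteq> V"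
  using Tset_cases W_subset_V by blast

lemma Tset_neighbour_in_W:
  assumes w: "w \<in> W" and x: "x \<in> Tset V E W w" "x \<noteq> w" and e: "E x y" and y: "y \<in> W"
  shows "y = w"
proof (rule ccontr)
  assume "y \<noteq> w"
  let ?T = "tree_edge V E W w"
  define L where "L = gdist ?T w x"
  obtain q where q: "q 0 = w" "q L = x" "\<forall>t<L. ?T (q t) (q (Suc t))"
    using walk_of_len_gdist[of ?T w x] x unfolding Tset_eq walk_of_len_def L_def by blast
  have inj_q: "inj_on q {0..L}" using shortest_walk_inj[OF q L_def] .
  have "1 \<le> L" using q x by (cases L) auto
  have q_out: "q t \<in> V - W" if "1 \<le> t" "t \<le> L" for t
  proof -
    have "q t \<in> (V - W) \<union> {w}"
      using q(3)[rule_format, of "t - 1"] that unfolding tree_edge_def by simp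
    moreover have "q t \<noteq> w" using inj_on_eq_iff[OF inj_q, of t 0] q(1) that by simp
    ultimately show ?thesis by blast
  qed
  \<comment> \<open>the walk from w to x followed by the edge to y is an ear of the component\<close>
  define p where "p t = (if t \<le> L then q t else y)" for t
  have "q t \<noteq> y" if "t \<le> L" for t
    using q_out[of t] that q(1) \<open>y \<noteq> w\<close> y by (cases "t = 0") auto
  then have "inj_on p {0..L + 1}"
    using inj_q unfolding inj_on_def p_def by (metis atLeastAtMost_iff le_SucE Suc_eq_plus1)
  moreover have "E (p t) (p (Suc t))" if "t < L + 1" for t
  proof (cases "t < L")
    case False
    then have "t = L" using that by simp
    then show ?thesis using q(2) e by (simp add: p_def)
  qed (use q(3) in \<open>auto simp: p_def tree_edge_def\<close>)
  ultimately show False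
    using two_ec_component_no_ear[OF component symp_E, of "L + 1" p] q_out \<open>1 \<le> L\<close> q(1) w y
    unfolding p_def by auto
qed

lemma Tset_closed:
  "w \<in> W \<Longrightarrow> x \<in> Tset V E W w \<Longrightarrow> x \<noteq> w \<Longrightarrow> E x y \<Longrightarrow> y \<in> Tset V E W w"
  using Tset_neighbour_in_W[of w x y] Tset_step[of x w y] by (cases "y \<in> W") auto

lemma gdist_through_root:
  assumes w: "w \<in> W" and v: "v \<in> Tset V E W w" and z: "z \<in> V" "z \<notin> Tset V E W w"
  shows "gdist E z v = gdist E z w + gdist E w v"
proof -
  have "v \<in> V" "w \<in> V" using Tset_subset_V w v W_subset_V by auto
  define L where "L = gdist E z v"
  obtain p where p: "p 0 = z" "p L = v" "\<forall>t<L. E (p t) (p (Suc t))"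
    using walk_of_len_gdist[OF reachable_V[OF z(1) \<open>v \<in> V\<close>]] unfolding walk_of_len_def L_def
    by blast
  \<comment> \<open>the first vertex of the walk inside the pendant set must be its root w\<close>
  define m where "m = (LEAST t. p t \<in> Tset V E W w)"
  have pm: "p m \<in> Tset V E W w" and "m \<le> L"
    unfolding m_def using p v by (auto intro: LeastI[of _ L] Least_le)
  have "m \<noteq> 0"
  proof
    assume "m = 0"
    with pm p(1) z(2) show False by simp
  qed
  then have "p (m - 1) \<notin> Tset V E W w" "E (p (m - 1)) (p m)"
    using not_less_Least[of "m - 1" "\<lambda>t. p t \<in> Tset V E W w"] p(3)[rule_format, of "m - 1"] \<open>m \<le> L\<close>
    unfolding m_def by auto
  then have "p m = w" using Tset_closed[OF w pm] sympD[OF symp_E] by blast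
  then have "gdist E z w \<le> m" "gdist E w v \<le> L - m"
    using gdist_le walk_of_len_prefix[of L E p, OF p(3) \<open>m \<le> L\<close>]
      walk_of_len_suffix[of L E p, OF p(3) \<open>m \<le> L\<close>] p
    by metis+
  moreover have "gdist E z v \<le> gdist E z w + gdist E w v"
    using gdist_triangle reachable_V z(1) \<open>w \<in> V\<close> \<open>v \<in> V\<close> by blast
  ultimately show ?thesis using \<open>m \<le> L\<close> L_def by linarith
qed

lemma Tset_disjoint:
  assumes w: "w \<in> W" "w' \<in> W" "w \<noteq> w'"
  shows "Tset V E W w \<inter> Tset V E W w' = {}"
proof (rule ccontr)
  assume "\<not> ?thesis"
  then obtain v where v: "v \<in> Tset V E W w" "v \<in> Tset V E W w'" by blast
  have "w \<in> V" "w' \<in> V" using w W_subset_V by auto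
  have "w \<notin> Tset V E W w'" "w' \<notin> Tset V E W w"
    using Tset_cases[of w V E W w'] Tset_cases[of w' V E W w] w by auto
  then have "gdist E w v = gdist E w w' + gdist E w' v" "gdist E w' v = gdist E w' w + gdist E w v"
    using gdist_through_root[OF w(2) v(2) \<open>w \<in> V\<close>] gdist_through_root[OF w(1) v(1) \<open>w' \<in> V\<close>]
    by simp_all
  then have "gdist E w w' = 0" using gdist_commute[OF symp_E, of w w'] by simp
  then show False
    using gdist_eq_0_imp_eq[OF reachable_V[OF \<open>w \<in> V\<close> \<open>w' \<in> V\<close>]] w(3) by blast
qed

lemma walk_leaving_W_in_Tset:
  assumes w: "w \<in> W" and p: "p 0 = w" "\<forall>t<L. E (p t) (p (Suc t))" "inj_on p {0..L}"
    and "p 1 \<notin> W" "1 \<le> t" "t \<le> L"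
  shows "p t \<in> Tset V E W w"
  using \<open>1 \<le> t\<close> \<open>t \<le> L\<close>
proof (induction t)
  case (Suc t)
  have e: "E (p t) (p (Suc t))" using p(2) Suc.prems by simp
  show ?case
  proof (cases "t = 0")
    case True
    then show ?thesis using Tset_step[of w w "p 1"] e p(1) \<open>p 1 \<notin> W\<close> by simp
  next
    case False
    then have "p t \<in> Tset V E W w" "p t \<noteq> w"
      using Suc inj_on_eq_iff[OF p(3), of t 0] p(1) by auto
    then show ?thesis using Tset_closed[OF w] e by blast
  qed
qed simp

end

section \<open>A 2-path in a Nash equilibrium graph\<close>

lemma min_recurrence_bound:
  fixes a0 a1 a2 a3 a4 a5 :: int
  assumes "a1 = 1 + min a0 a2" "a2 = 1 + min a1 a3" "a3 = 1 + min a2 a4" "a4 = 1 + min a3 a5"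
    and "\<bar>a1 - a0\<bar> \<le> 1" "\<bar>a2 - a1\<bar> \<le> 1" "\<bar>a3 - a2\<bar> \<le> 1" "\<bar>a4 - a3\<bar> \<le> 1"
    "\<bar>a5 - a4\<bar> \<le> 1"
  shows "2 \<le> a5 - a0
    + 2 * (of_bool (a1 < a0) + of_bool (a2 < a1) + of_bool (a3 < a2) + of_bool (a4 < a3))"
  using assms unfolding min_def abs_le_iff of_bool_def by smt

locale nash_two_path =
  fixes n :: nat and \<alpha> :: real and s :: "nat \<Rightarrow> nat set"
    and W :: "nat set" and F :: "nat \<Rightarrow> nat \<Rightarrow> bool"
    and u :: "nat \<Rightarrow> nat" and k :: nat
  assumes ne: "nash_equilibrium n \<alpha> s"
    and ec_component: "two_ec_component {1..n} (Gs n s) W F"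
    and large_girth: "girth (Gs n s) > 14"
    and two_path: "two_path s W F u k"
    and k_ge_5: "5 \<le> k"
    and bought: "\<forall>i<k. u (Suc i) \<in> s (u i)"
begin

abbreviation "V \<equiv> {1..n}"
abbreviation "E \<equiv> Gs n s"
abbreviation "T i \<equiv> Tset V E W (u i)"

sublocale component_graph V E W F
  by (rule component_graph.intro)
    (use ec_component symp_Gs Gs_in_V nash_equilibrium_reachable[OF ne] in blast)+

lemma u_in_W: "i \<le> k \<Longrightarrow> u i \<in> W"
  using two_path unfolding two_path_def by blast

lemma u_in_V: "i \<le> k \<Longrightarrow> u i \<in> V"
  using u_in_W W_subset_V by blast

lemma u_eq_iff: "i \<le> k \<Longrightarrow> j \<le> k \<Longrightarrow> u i = u j \<longleftrightarrow> i = j"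
  using two_path unfolding two_path_def inj_on_def by auto

lemma F_u: "i < k \<Longrightarrow> F (u i) (u (Suc i))"
  using two_path unfolding two_path_def by blast

lemma E_u: "i < k \<Longrightarrow> E (u i) (u (Suc i))"
  using F_u F_imp_E by blast

lemma walk_of_len_u: "a \<le> b \<Longrightarrow> b \<le> k \<Longrightarrow> walk_of_len E (b - a) (u a) (u b)"
  unfolding walk_of_len_def by (rule exI[of _ "\<lambda>t. u (a + t)"]) (auto intro!: E_u)

lemma u_in_T_iff: "i \<le> k \<Longrightarrow> j \<le> k \<Longrightarrow> u j \<in> T i \<longleftrightarrow> i = j"
  using Tset_cases[of "u j" V E W "u i"] u_in_W[of j] u_eq_iff by auto

lemma T_disjoint: "i \<le> k \<Longrightarrow> j \<le> k \<Longrightarrow> i \<noteq> j \<Longrightarrow> x \<in> T i \<Longrightarrow> x \<notin> T j"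
  using Tset_disjoint[of "u i" "u j"] u_in_W u_eq_iff by blast

lemma interior_neighbour_in_W:
  assumes i: "1 \<le> i" "i < k" and e: "E (u i) y" and y: "y \<in> W"
  shows "y = u (i - 1) \<or> y = u (Suc i)"
proof (cases "F (u i) y")
  case True
  have deg: "indeg_H s W F (u i) = 1" "outdeg_H s W F (u i) = 1"
    using two_path i unfolding two_path_def by auto
  have card_1: "a = b" if "card A = 1" "a \<in> A" "b \<in> A" for a b and A :: "nat set"
    using that by (metis card_1_singletonE singletonD)
  consider "y \<in> s (u i)" | "u i \<in> s y" using e unfolding Gs_def by blast
  then show ?thesis
  proof cases
    case 1
    have "u (Suc i) \<in> {v\<in>W. F (u i) v \<and> v \<in> s (u i)}"
      using bought F_u u_in_W i by auto
    then show ?thesis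
      using card_1[OF deg(2)[unfolded outdeg_H_def]] 1 True y by blast
  next
    case 2
    have "u (i - 1) \<in> {v\<in>W. F (u i) v \<and> u i \<in> s v}"
      using bought[rule_format, of "i - 1"] F_u[of "i - 1"] sympD[OF symp_F] u_in_W i by auto
    then show ?thesis
      using card_1[OF deg(1)[unfolded indeg_H_def]] 2 True y by blast
  qed
next
  case False
  \<comment> \<open>otherwise the single edge from u i to y is an ear\<close>
  let ?p = "\<lambda>t::nat. if t = 0 then u i else y"
  have "u i \<noteq> y" using e unfolding Gs_def by blast
  then have "inj_on ?p {0..1}" by (auto simp: inj_on_def)
  then have False
    using two_ec_component_no_ear[OF component symp_E, of 1 ?p] u_in_W[of i] i y e False
    by auto
  then show ?thesis ..
qed

lemma gdist_interior:
  assumes i: "1 \<le> i" "i < k" and v: "v \<in> V" "v \<notin> T i"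
  shows "gdist E (u i) v = 1 + min (gdist E (u (i - 1)) v) (gdist E (u (Suc i)) v)"
proof -
  have "u i \<in> V" using u_in_V i by simp
  define L where "L = gdist E (u i) v"
  obtain p where p: "p 0 = u i" "p L = v" "\<forall>t<L. E (p t) (p (Suc t))"
    using walk_of_len_gdist[OF reachable_V[OF \<open>u i \<in> V\<close> v(1)]] unfolding walk_of_len_def L_def
    by blast
  have "L \<noteq> 0"
  proof
    assume "L = 0"
    then show False using p(1,2) v(2) by simp
  qed
  \<comment> \<open>a shortest path leaving u i outside H would stay in T i\<close>
  have "p 1 \<in> W"
    using walk_leaving_W_in_Tset[OF u_in_W p(1,3) shortest_walk_inj[OF p L_def], of L] p(2) v(2)
      \<open>L \<noteq> 0\<close> i by auto
  moreover have "E (u i) (p 1)" using p \<open>L \<noteq> 0\<close> by auto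
  ultimately have "p 1 = u (i - 1) \<or> p 1 = u (Suc i)"
    using interior_neighbour_in_W[OF i] by blast
  moreover have "gdist E (p 1) v \<le> L - 1"
    using gdist_le[OF walk_of_len_suffix[of L E p 1]] p \<open>L \<noteq> 0\<close> by auto
  moreover have "E (u i) (u (i - 1))" "E (u i) (u (Suc i))"
    using E_u[of "i - 1"] E_u[of i] sympD[OF symp_E] i by auto
  note this[THEN gdist_le_Suc_neighbour, OF v(1)]
  ultimately show ?thesis
    using \<open>L \<noteq> 0\<close> unfolding L_def by (cases "p 1 = u (i - 1)") (auto simp: min_def)
qed

definition E_avoiding :: "nat \<Rightarrow> nat \<Rightarrow> bool" where
  "E_avoiding x y \<longleftrightarrow> E x y \<and> x \<notin> u ` {1..4} \<and> y \<notin> u ` {1..4}"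

lemma symp_E_avoiding: "symp E_avoiding"
  using symp_E unfolding E_avoiding_def symp_def by blast

text \<open>A short detour from u 0 to u 5 around u 1, ..., u 4 would close a short cycle.\<close>
lemma gdist_E_avoiding_ge:
  assumes "reachable E_avoiding (u 0) (u 5)"
  shows "10 \<le> gdist E_avoiding (u 0) (u 5)"
proof -
  define l where "l = gdist E_avoiding (u 0) (u 5)"
  obtain r where r: "r 0 = u 0" "r l = u 5" "\<forall>t<l. E_avoiding (r t) (r (Suc t))"
    using walk_of_len_gdist[OF assms] unfolding walk_of_len_def l_def by blast
  have inj_r: "inj_on r {0..l}" using shortest_walk_inj[OF r l_def] .
  have "u 0 \<noteq> u 5" using u_eq_iff k_ge_5 by simp
  then have "1 \<le> l" using r by (cases l) auto
  have "r t \<notin> u ` {0..5}" if "0 < t" "t < l" for t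
  proof -
    have "r t \<noteq> u 0" "r t \<noteq> u 5"
      using inj_on_eq_iff[OF inj_r, of t 0] inj_on_eq_iff[OF inj_r, of t l] r(1,2) that by auto
    moreover have "r t \<notin> u ` {1..4}" using r(3) that unfolding E_avoiding_def by blast
    moreover have "{0..5::nat} = {0, 5} \<union> {1..4}" by auto
    ultimately show ?thesis by auto
  qed
  moreover have "inj_on u {0..5}" using u_eq_iff k_ge_5 by (auto simp: inj_on_def)
  ultimately have "has_cycle_len E (5 + l)"
    using has_cycle_len_two_paths[OF symp_E, of u 5 r l] r E_u k_ge_5 \<open>1 \<le> l\<close> inj_r
    unfolding E_avoiding_def by auto
  then have "(14::enat) < enat (5 + l)" using large_girth girth_le order.strict_trans2 by blast
  then show ?thesis unfolding l_def by (simp add: numeral_eq_enat)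
qed

text \<open>A 1-Lipschitz potential with value i at u i for i \<le> 5; it shows that u 0, ..., u 5 is
  a geodesic.\<close>
definition level :: "nat \<Rightarrow> int" where
  "level x = (if x \<in> T 1 then 1 else if x \<in> T 2 then 2 else if x \<in> T 3 then 3
     else if x \<in> T 4 then 4 else trunc_gdist E_avoiding (u 0) 5 x)"

lemma level_T:
  assumes i: "i \<in> {1..4}" and x: "x \<in> T i"
  shows "level x = int i"
proof -
  have other: "x \<notin> T j" if "j \<le> 5" "j \<noteq> i" for j
    using T_disjoint[of i j x] i x that k_ge_5 by auto
  have "i = 1 \<or> i = 2 \<or> i = 3 \<or> i = 4" using i by auto
  then show ?thesis using x other[of 1] other[of 2] other[of 3] unfolding level_def by auto
qed

lemma level_outside_T: "\<forall>i\<in>{1..4}. x \<notin> T i \<Longrightarrow> level x = trunc_gdist E_avoiding (u 0) 5 x"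
  unfolding level_def by simp

lemma level_u: "i \<le> 5 \<Longrightarrow> level (u i) = int i"
proof -
  assume "i \<le> 5"
  consider "i \<in> {1..4}" | "i = 0" | "i = 5" using \<open>i \<le> 5\<close> by force
  then show ?thesis
  proof cases
    case 1
    then show ?thesis using level_T[OF 1] Tset_self by blast
  next
    case 2
    then show ?thesis
      using level_outside_T[of "u 0"] u_in_T_iff[of _ 0] k_ge_5
      unfolding trunc_gdist_def reachable_def by auto
  next
    case 3
    then show ?thesis
      using level_outside_T[of "u 5"] u_in_T_iff[of _ 5] k_ge_5 gdist_E_avoiding_ge
      unfolding trunc_gdist_def by auto
  qed
qed

lemma level_lipschitz_T:
  assumes e: "E x y" and i: "i \<in> {1..4}" and x: "x \<in> T i"
  shows "\<bar>level x - level y\<bar> \<le> 1"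
proof (cases "y \<in> T i")
  case False
  have "1 \<le> i" "i < k" using i k_ge_5 by auto
  have "x = u i" using Tset_closed[OF u_in_W x _ e] False \<open>i < k\<close> by auto
  moreover have "y \<in> W" using Tset_step[OF x e] False by blast
  ultimately have "y = u (i - 1) \<or> y = u (Suc i)"
    using interior_neighbour_in_W[OF \<open>1 \<le> i\<close> \<open>i < k\<close>] e by blast
  then have "level y = int i - 1 \<or> level y = int i + 1" using level_u i by auto
  then show ?thesis using level_T[OF i x] by auto
qed (use level_T i x in simp)

lemma level_lipschitz:
  assumes e: "E x y"
  shows "\<bar>level x - level y\<bar> \<le> 1"
proof (cases "\<exists>i\<in>{1..4}. x \<in> T i \<or> y \<in> T i")
  case True
  then show ?thesis
    using level_lipschitz_T[OF e] level_lipschitz_T[OF sympD[OF symp_E e]] by force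
next
  case False
  have "x \<notin> u ` {1..4}" "y \<notin> u ` {1..4}" using False Tset_self by blast+
  then have "E_avoiding x y" using e unfolding E_avoiding_def by blast
  then show ?thesis
    using trunc_gdist_lipschitz[OF symp_E_avoiding] False level_outside_T by simp
qed

lemma gdist_u:
  assumes "a \<le> 5" "b \<le> 5"
  shows "int (gdist E (u a) (u b)) = \<bar>int a - int b\<bar>"
proof -
  have "reachable E (u a) (u b)" using reachable_V u_in_V assms k_ge_5 by simp
  from walk_of_len_gdist[OF this]
  have "\<bar>level (u a) - level (u b)\<bar> \<le> int (gdist E (u a) (u b))"
    using lipschitz_potential_le_walk_length[where E = E and \<phi> = level] level_lipschitz by blast
  moreover have "gdist E (u a) (u b) \<le> (if a \<le> b then b - a else a - b)"
  proof (cases "a \<le> b")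
    case True
    then show ?thesis using gdist_le[OF walk_of_len_u[OF True]] assms k_ge_5 by simp
  next
    case False
    then have "gdist E (u b) (u a) \<le> a - b" using gdist_le[OF walk_of_len_u[of b a]] assms k_ge_5
      by simp
    then show ?thesis using False gdist_commute[OF symp_E, of "u a" "u b"] by simp
  qed
  ultimately show ?thesis using level_u assms by (auto split: if_splits)
qed

definition dist_u :: "nat \<Rightarrow> nat \<Rightarrow> int" where
  "dist_u j v = int (gdist E (u j) v)"

lemma dist_u_lipschitz:
  assumes "j < k" "v \<in> V"
  shows "\<bar>dist_u (Suc j) v - dist_u j v\<bar> \<le> 1"
  using gdist_le_Suc_neighbour[OF E_u[OF assms(1)] assms(2)]
    gdist_le_Suc_neighbour[OF sympD[OF symp_E E_u[OF assms(1)]] assms(2)]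
  unfolding dist_u_def by linarith

text \<open>Upper bound for the change of the distance from u j to v when u j swaps its link
  to u (j+1) for a link to u (j+2).\<close>
definition swap_bound :: "nat \<Rightarrow> nat \<Rightarrow> int" where
  "swap_bound j v = (if v \<in> T (Suc j) then 1 else if dist_u (Suc j) v < dist_u j v then -1 else 0)"

definition swapped :: "nat \<Rightarrow> nat \<Rightarrow> nat set" where
  "swapped j = s(u j := insert (u (Suc (Suc j))) (s (u j) - {u (Suc j)}))"

lemma Gs_swapped_keeps:
  assumes "E x y" "{x, y} \<noteq> {u j, u (Suc j)}"
  shows "Gs n (swapped j) x y"
  using assms unfolding Gs_def swapped_def by (auto simp: doubleton_eq_iff)

lemma walk_swapped_avoiding:
  assumes "x \<in> V" "v \<in> V" "c = u j \<or> c = u (Suc j)" "c \<noteq> x" "gdist E x v \<le> gdist E c v"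
  shows "walk_of_len (Gs n (swapped j)) (gdist E x v) x v"
proof -
  obtain p where p: "p 0 = x" "p (gdist E x v) = v" "\<forall>t<gdist E x v. E (p t) (p (Suc t))"
    using walk_of_len_gdist[OF reachable_V[OF assms(1,2)]] unfolding walk_of_len_def by blast
  have "walk_of_len (\<lambda>a b. E a b \<and> a \<noteq> c \<and> b \<noteq> c) (gdist E x v) x v"
    using shortest_walk_avoids[OF p refl] assms(4,5) by blast
  moreover have "(\<lambda>a b. E a b \<and> a \<noteq> c \<and> b \<noteq> c) \<le> Gs n (swapped j)"
    using Gs_swapped_keeps assms(3) by (auto simp: doubleton_eq_iff)
  ultimately show ?thesis by (rule walk_of_len_mono[rotated])
qed

lemma swapped_edges:
  assumes "j < 4"
  shows "Gs n (swapped j) (u j) (u (Suc (Suc j)))" "Gs n (swapped j) (u (Suc (Suc j))) (u (Suc j))"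
proof -
  have jk: "Suc (Suc j) \<le> k" using assms k_ge_5 by simp
  then have "u j \<noteq> u (Suc (Suc j))" "u (Suc j) \<noteq> u (Suc (Suc j))" using u_eq_iff by auto
  then show "Gs n (swapped j) (u j) (u (Suc (Suc j)))"
    using u_in_V jk unfolding Gs_def swapped_def by auto
  show "Gs n (swapped j) (u (Suc (Suc j))) (u (Suc j))"
    using Gs_swapped_keeps sympD[OF symp_E E_u[of "Suc j"]] jk \<open>u j \<noteq> u (Suc (Suc j))\<close>
      \<open>u (Suc j) \<noteq> u (Suc (Suc j))\<close> by (auto simp: doubleton_eq_iff)
qed

lemma swapped_walk_bound:
  assumes j: "j < 4" and v: "v \<in> V"
  shows "\<exists>m. walk_of_len (Gs n (swapped j)) m (u j) v \<and> int m \<le> dist_u j v + swap_bound j v"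
proof -
  let ?G = "Gs n (swapped j)"
  define a b c where "a = u j" and "b = u (Suc j)" and "c = u (Suc (Suc j))"
  have jk: "Suc (Suc j) \<le> k" using j k_ge_5 by simp
  have V: "a \<in> V" "b \<in> V" "c \<in> V" using u_in_V jk unfolding a_def b_def c_def by auto
  have "a \<noteq> b" "b \<noteq> c" using u_eq_iff jk unfolding a_def b_def c_def by auto
  have "int (gdist E a b) = 1" using gdist_u[of j "Suc j"] j unfolding a_def b_def by simp
  have G_ac: "?G a c" and G_cb: "?G c b"
    using swapped_edges[OF j] unfolding a_def b_def c_def by auto
  consider (in_T) "v \<in> T (Suc j)" | (closer) "v \<notin> T (Suc j)" "dist_u (Suc j) v < dist_u j v"
    | (other) "v \<notin> T (Suc j)" "\<not> dist_u (Suc j) v < dist_u j v" by blast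
  then show ?thesis
  proof cases
    case in_T
    \<comment> \<open>go round through u (j+2), then along a shortest path from u (j+1)\<close>
    have "a \<notin> T (Suc j)" using u_in_T_iff jk unfolding a_def by simp
    then have "gdist E a v = 1 + gdist E b v"
      using gdist_through_root[OF u_in_W in_T V(1)] jk \<open>int (gdist E a b) = 1\<close>
      unfolding a_def b_def by simp
    then have "walk_of_len ?G (gdist E b v) b v"
      using walk_swapped_avoiding[of b v a] V v \<open>a \<noteq> b\<close> unfolding a_def b_def by simp
    then have "walk_of_len ?G (1 + (1 + gdist E b v)) a v"
      using walk_of_len_append walk_of_len_edge G_ac G_cb by metis
    then show ?thesis
      using in_T \<open>gdist E a v = 1 + gdist E b v\<close> unfolding swap_bound_def dist_u_def a_def
      by (intro exI[of _ "2 + gdist E b v"]) simp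
  next
    case closer
    have "gdist E b v = 1 + min (gdist E a v) (gdist E c v)"
      using gdist_interior[of "Suc j" v] closer(1) v jk unfolding a_def b_def c_def by simp
    then have "gdist E c v + 2 = gdist E a v" "gdist E c v \<le> gdist E b v"
      using closer(2) dist_u_lipschitz[of j v] jk v unfolding dist_u_def a_def b_def c_def by auto
    moreover have "walk_of_len ?G (gdist E c v) c v"
      using walk_swapped_avoiding[of c v b] V v \<open>b \<noteq> c\<close> calculation(2)
      unfolding b_def c_def by simp
    then have "walk_of_len ?G (1 + gdist E c v) a v"
      using walk_of_len_append walk_of_len_edge G_ac by metis
    ultimately show ?thesis
      using closer unfolding swap_bound_def dist_u_def a_def
      by (intro exI[of _ "1 + gdist E c v"]) simp
  next
    case other
    then have "walk_of_len ?G (gdist E a v) a v"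
      using walk_swapped_avoiding[of a v b] V v \<open>a \<noteq> b\<close> unfolding dist_u_def a_def b_def by simp
    then show ?thesis
      using other unfolding swap_bound_def dist_u_def a_def[symmetric]
      by (intro exI[of _ "gdist E a v"]) simp
  qed
qed

lemma swap_bound_sum_nonneg:
  assumes j: "j < 4"
  shows "0 \<le> (\<Sum>v\<in>V. swap_bound j v)"
proof -
  define S where "S = insert (u (Suc (Suc j))) (s (u j) - {u (Suc j)})"
  have jk: "Suc (Suc j) \<le> k" using j k_ge_5 by simp
  have "u j \<in> V" "u (Suc (Suc j)) \<in> V" "u j \<noteq> u (Suc (Suc j))"
    using u_in_V u_eq_iff jk by auto
  have s_uj: "s (u j) \<subseteq> V - {u j}"
    using ne \<open>u j \<in> V\<close> unfolding nash_equilibrium_def strategy_profile_def by blast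
  have "u (Suc j) \<in> s (u j)" using bought jk by simp
  moreover have "u (Suc (Suc j)) \<notin> s (u j)"
  proof
    assume "u (Suc (Suc j)) \<in> s (u j)"
    then have "E (u j) (u (Suc (Suc j)))"
      using \<open>u j \<in> V\<close> \<open>u (Suc (Suc j)) \<in> V\<close> \<open>u j \<noteq> u (Suc (Suc j))\<close> unfolding Gs_def by blast
    then show False using gdist_edge[of E] gdist_u[of j "Suc (Suc j)"] j by fastforce
  qed
  moreover have "finite (s (u j))" using finite_subset[OF s_uj] by simp
  ultimately have "card S = card (s (u j))"
    unfolding S_def by (metis DiffD1 card_Suc_Diff1 card_insert_disjoint finite_Diff)
  moreover have "S \<subseteq> V - {u j}"
    using s_uj \<open>u (Suc (Suc j)) \<in> V\<close> \<open>u j \<noteq> u (Suc (Suc j))\<close> unfolding S_def by blast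
  moreover have walks: "\<forall>v\<in>V. \<exists>m. walk_of_len (Gs n (swapped j)) m (u j) v
      \<and> int m \<le> dist_u j v + swap_bound j v"
    using swapped_walk_bound[OF j] by blast
  ultimately have "Dsum n E (u j) \<le> Dsum n (Gs n (swapped j)) (u j)"
    using nash_equilibrium_Dsum_le_deviation[OF ne \<open>u j \<in> V\<close>, of S]
    unfolding swapped_def S_def reachable_iff_walk_of_len by blast
  also have "int (Dsum n (Gs n (swapped j)) (u j)) \<le> (\<Sum>v\<in>V. dist_u j v + swap_bound j v)"
    unfolding Dsum_eq_sum[OF \<open>u j \<in> V\<close>] using walks gdist_le by (force intro: sum_mono)
  finally show ?thesis
    unfolding Dsum_eq_sum[OF \<open>u j \<in> V\<close>] dist_u_def by (simp add: sum.distrib)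
qed

lemma dist_u_T:
  assumes i: "i \<in> {1..4}" and v: "v \<in> T i" and j: "j \<le> 5" "j \<noteq> i"
  shows "dist_u j v = \<bar>int j - int i\<bar> + dist_u i v"
proof -
  have "i \<le> k" "j \<le> k" using i j k_ge_5 by auto
  then have "u j \<notin> T i" "u j \<in> V" using u_in_T_iff u_in_V j(2) by auto
  then have "gdist E (u j) v = gdist E (u j) (u i) + gdist E (u i) v"
    using gdist_through_root[OF u_in_W[OF \<open>i \<le> k\<close>] v] by blast
  then show ?thesis using gdist_u[of j i] i j(1) unfolding dist_u_def by simp
qed

lemma vertex_inequality:
  assumes v: "v \<in> V"
  shows "2 \<le> dist_u 5 v - dist_u 0 v + (\<Sum>i\<in>{1..4}. of_bool (v \<in> T i)) - 2 * (\<Sum>j<4. swap_bound j v)"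
proof -
  have sets: "{..<4::nat} = {0, 1, 2, 3}" "{1..4::nat} = {1, 2, 3, 4}" by auto
  show ?thesis
  proof (cases "\<exists>i\<in>{1..4}. v \<in> T i")
    case True
    then obtain i where i: "i \<in> {1..4}" "v \<in> T i" by blast
    have other: "v \<notin> T j" if "j \<in> {1..4}" "j \<noteq> i" for j
      using T_disjoint[of i j v] i that k_ge_5 by auto
    have "i = 1 \<or> i = 2 \<or> i = 3 \<or> i = 4" using i(1) by auto
    then show ?thesis
      using i other dist_u_T[OF i] unfolding sets swap_bound_def by (elim disjE) auto
  next
    case False
    define d where "d i = dist_u i v" for i
    have rec: "d i = 1 + min (d (i - 1)) (d (i + 1))" if "1 \<le> i" "i \<le> 4" for i
      using gdist_interior[of i v] False v k_ge_5 that unfolding d_def dist_u_def by auto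
    have lip: "\<bar>d (i + 1) - d i\<bar> \<le> 1" if "i < 5" for i
      using dist_u_lipschitz v k_ge_5 that unfolding d_def by simp
    have "d 1 = 1 + min (d 0) (d 2)" using rec[of 1] by (simp add: eval_nat_numeral)
    moreover have "d 2 = 1 + min (d 1) (d 3)" using rec[of 2] by (simp add: eval_nat_numeral)
    moreover have "d 3 = 1 + min (d 2) (d 4)" using rec[of 3] by (simp add: eval_nat_numeral)
    moreover have "d 4 = 1 + min (d 3) (d 5)" using rec[of 4] by (simp add: eval_nat_numeral)
    moreover have "\<bar>d 1 - d 0\<bar> \<le> 1" "\<bar>d 2 - d 1\<bar> \<le> 1" "\<bar>d 3 - d 2\<bar> \<le> 1"
      "\<bar>d 4 - d 3\<bar> \<le> 1" "\<bar>d 5 - d 4\<bar> \<le> 1"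
      using lip[of 0] lip[of 1] lip[of 2] lip[of 3] lip[of 4] by (simp_all add: eval_nat_numeral)
    ultimately have bound: "2 \<le> d 5 - d 0
        + 2 * (of_bool (d 1 < d 0) + of_bool (d 2 < d 1) + of_bool (d 3 < d 2) + of_bool (d 4 < d 3))"
      by (rule min_recurrence_bound)
    have "(\<Sum>j<4. swap_bound j v)
        = - (of_bool (d 1 < d 0) + of_bool (d 2 < d 1) + of_bool (d 3 < d 2) + of_bool (d 4 < d 3))"
      using False unfolding sets swap_bound_def d_def by (simp add: eval_nat_numeral)
    moreover have "(\<Sum>i\<in>{1..4}. of_bool (v \<in> T i)) = (0::int)" using False by simp
    ultimately show ?thesis using bound unfolding d_def by simp
  qed
qed

lemma Dsum_difference_bound:
  "int (Dsum n E (u 5)) - int (Dsum n E (u 0)) \<ge> 2 * int n - int (\<Sum>i\<in>{1..4}. card (T i))"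
proof -
  define pendants where "pendants v = (\<Sum>i\<in>{1..4}. of_bool (v \<in> T i) :: int)" for v
  define swaps where "swaps v = (\<Sum>j<4. swap_bound j v)" for v
  have "int (\<Sum>i\<in>{1..4}. card (T i)) = (\<Sum>i\<in>{1..4}. \<Sum>v\<in>V. of_bool (v \<in> T i))"
    using Tset_subset_V u_in_W k_ge_5 by (auto intro!: sum.cong simp: Int_absorb1)
  also have "\<dots> = (\<Sum>v\<in>V. pendants v)" unfolding pendants_def by (rule sum.swap)
  finally have "int (\<Sum>i\<in>{1..4}. card (T i)) = (\<Sum>v\<in>V. pendants v)" .
  moreover have "0 \<le> (\<Sum>v\<in>V. swaps v)"
    unfolding swaps_def using swap_bound_sum_nonneg by (subst sum.swap) (auto intro: sum_nonneg)
  moreover have "(\<Sum>v\<in>V. 2) \<le> (\<Sum>v\<in>V. dist_u 5 v - dist_u 0 v + pendants v - 2 * swaps v)"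
    using vertex_inequality unfolding pendants_def swaps_def by (rule sum_mono)
  then have "2 * int n \<le> (\<Sum>v\<in>V. dist_u 5 v) - (\<Sum>v\<in>V. dist_u 0 v) + (\<Sum>v\<in>V. pendants v)
      - 2 * (\<Sum>v\<in>V. swaps v)"
    by (simp add: sum.distrib sum_subtractf sum_distrib_left)
  ultimately show ?thesis
    using Dsum_eq_sum[OF u_in_V, of 5] Dsum_eq_sum[OF u_in_V, of 0] k_ge_5 unfolding dist_u_def
    by simp
qed

end

theorem proposition5:
  fixes n :: nat and \<alpha> :: real and s :: "nat \<Rightarrow> nat set"
    and W :: "nat set" and F :: "nat \<Rightarrow> nat \<Rightarrow> bool"
    and u :: "nat \<Rightarrow> nat" and k :: nat
  assumes "\<alpha> > 0"
    and "nash_equilibrium n \<alpha> s"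
    and "two_ec_component {1..n} (Gs n s) W F"
    and "card W \<ge> 3"
    and "girth (Gs n s) > 14"
    and "two_path s W F u k"
    and "k \<ge> 5"
    and "\<forall>i<k. u (Suc i) \<in> s (u i)"
  shows "int (Dsum n (Gs n s) (u 5)) - int (Dsum n (Gs n s) (u 0))
           \<ge> 2 * int n - int (\<Sum>i\<in>{1..4}. card (Tset {1..n} (Gs n s) W (u i)))"
proof -
  interpret nash_two_path n \<alpha> s W F u k
    using assms by unfold_locales auto
  show ?thesis by (rule Dsum_difference_bound)
qed

end
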